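(* Let $n$ be a positive integer. For any even integer $k$ with $\frac{n+1}{2}\le k\le n$, \[\lambda_{\min}(H_{n,k})=\frac{n-2k}{k}\binom{n-1}{k-1}\quad\text{and}\quad\chi_v(H_{n,k})=\frac{2k}{2k-n}.\] Furthermore, for any even integer $k$ with $n/2+1\le k\le n-1$, the map $x\mapsto p_x\in\mathbb{R}^n$ with $p_x(i)=(-1)^{x_i}/\sqrt{n}$ for $i\in[n]$ is a canonical vector coloring of $H_{n,k}$.
   Context: $H_{n,k}$ is the graph on the even-weight elements of $\mathbb{Z}_2^n$ with $x\sim y$ iff $x$ and $y$ differ in exactly $k$ coordinates; $\lambda_{\min}$ denotes the least eigenvalue of the adjacency matrix. A vector $t$-coloring ($t\ge2$) assigns unit vectors to vertices with $\langle p_i,p_j\rangle\le-1/(t-1)$ on edges, and $\chi_v$ is the least such $t$. For a graph on $N$ vertices whose least adjacency eigenvalue has multiplicity $d$, a canonical vector coloring is obtained by taking an $N\times d$ matrix $Q$ whose columns form an orthonormal basis of the least eigenspace and assigning to vertex $i$ the vector $\sqrt{N/d}$ times the $i$-th row of $Q$ (all choices of basis yield the same Gram matrix). *)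

theory Defs
  imports Complex_Main
begin

text \<open>Vertices of H_{n,k}: even-weight elements of Z_2^n, represented by their
support x \<subseteq> {0..<n} (so x_i = 1 iff i \<in> x).\<close>
definition Hverts :: "nat \<Rightarrow> nat set set" where
  "Hverts n = {x. x \<subseteq> {..<n} \<and> even (card x)}"

definition Hadj :: "nat \<Rightarrow> nat \<Rightarrow> nat set \<Rightarrow> nat set \<Rightarrow> bool" where
  "Hadj n k x y \<longleftrightarrow> card ((x - y) \<union> (y - x)) = k"

definition Hadj_mat :: "nat \<Rightarrow> nat \<Rightarrow> nat set \<Rightarrow> nat set \<Rightarrow> real" where
  "Hadj_mat n k x y = (if Hadj n k x y then 1 else 0)"

definition is_eigenvector :: "'v set \<Rightarrow> ('v \<Rightarrow> 'v \<Rightarrow> real) \<Rightarrow> real \<Rightarrow> ('v \<Rightarrow> real) \<Rightarrow> bool" where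
  "is_eigenvector V A l f \<longleftrightarrow> (\<exists>x\<in>V. f x \<noteq> 0) \<and> (\<forall>x\<in>V. (\<Sum>y\<in>V. A x y * f y) = l * f x)"

definition is_eigenvalue :: "'v set \<Rightarrow> ('v \<Rightarrow> 'v \<Rightarrow> real) \<Rightarrow> real \<Rightarrow> bool" where
  "is_eigenvalue V A l \<longleftrightarrow> (\<exists>f. is_eigenvector V A l f)"

definition lambda_min :: "'v set \<Rightarrow> ('v \<Rightarrow> 'v \<Rightarrow> real) \<Rightarrow> real" where
  "lambda_min V A = Min {l. is_eigenvalue V A l}"

definition vector_coloring :: "'v set \<Rightarrow> ('v \<Rightarrow> 'v \<Rightarrow> bool) \<Rightarrow> real \<Rightarrow> nat \<Rightarrow> ('v \<Rightarrow> nat \<Rightarrow> real) \<Rightarrow> bool" where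
  "vector_coloring V E t m p \<longleftrightarrow> t \<ge> 2 \<and>
     (\<forall>x\<in>V. (\<Sum>i<m. (p x i)\<^sup>2) = 1) \<and>
     (\<forall>x\<in>V. \<forall>y\<in>V. E x y \<longrightarrow> (\<Sum>i<m. p x i * p y i) \<le> - 1 / (t - 1))"

definition chi_v :: "'v set \<Rightarrow> ('v \<Rightarrow> 'v \<Rightarrow> bool) \<Rightarrow> real" where
  "chi_v V E = Inf {t. \<exists>m p. vector_coloring V E t m p}"

text \<open>p (vectors in R^m) is a canonical vector coloring: there is a V x m matrix Q
(columns q 0, ..., q (m-1)) whose columns form an orthonormal basis of the least
eigenspace of A, with p x = sqrt(|V|/m) * (row x of Q).\<close>
definition canonical_vector_coloring :: "'v set \<Rightarrow> ('v \<Rightarrow> 'v \<Rightarrow> real) \<Rightarrow> nat \<Rightarrow> ('v \<Rightarrow> nat \<Rightarrow> real) \<Rightarrow> bool" where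
  "canonical_vector_coloring V A m p \<longleftrightarrow>
     (\<exists>q :: nat \<Rightarrow> 'v \<Rightarrow> real.
        (\<forall>i<m. is_eigenvector V A (lambda_min V A) (q i)) \<and>
        (\<forall>i<m. \<forall>j<m. (\<Sum>x\<in>V. q i x * q j x) = (if i = j then 1 else 0)) \<and>
        (\<forall>f. is_eigenvector V A (lambda_min V A) f \<longrightarrow>
             (\<exists>c. \<forall>x\<in>V. f x = (\<Sum>i<m. c i * q i x))) \<and>
        (\<forall>x\<in>V. \<forall>i<m. p x i = sqrt (real (card V) / real m) * q i x))"

end

theory Submission
  imports Defs
begin

text \<open>The characters \<open>walsh S x = (-1) ^ card (S \<inter> x)\<close>
  diagonalise the distance-\<open>k\<close> graph on all of \<open>Pow {..<n}\<close>, the eigenvalue at \<open>walsh S\<close>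
  being the Krawtchouk number \<open>K\<^sub>k(card S)\<close>. For even \<open>k\<close> that graph has no edges between
  even and odd sets, so the eigenvalues of \<open>H\<^sub>n\<^sub>,\<^sub>k\<close> are exactly the \<open>K\<^sub>k(s)\<close> with
  \<open>s \<le> n\<close>. For even \<open>k > n/2\<close>, reflecting \<open>k\<close> to \<open>n - k\<close> and a Pascal-type induction give
  \<open>K\<^sub>k(s) \<ge> K\<^sub>k(1) = (n - 2k) C(n,k) / n\<close>, strictly unless \<open>s \<in> {1, n - 1}\<close> once
  \<open>n/2 + 1 \<le> k < n\<close>.

  Summing the Rayleigh bound \<open>K\<^sub>k(1) |f|\<^sup>2 \<le> \<langle>A f, f\<rangle>\<close> over the coordinates of a vector colouring of
  this \<open>C(n,k)\<close>-regular graph gives \<open>\<chi>\<^sub>v \<ge> 1 - C(n,k) / K\<^sub>k(1) = 2k / (2k - n)\<close>, which the sign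
  vectors attain. In the strict case the least eigenspace is spanned by the \<open>walsh {i}\<close>, and their
  normalised rows are the sign vectors again.\<close>

section \<open>Walsh characters\<close>

lemma card_sym_diff_parity:
  assumes "finite x" "finite y"
  shows "card (sym_diff x y) + 2 * card (x \<inter> y) = card x + card y"
proof -
  have "card x = card (x \<inter> y) + card (x - y)" "card y = card (x \<inter> y) + card (y - x)"
    using card_Int_Diff[OF assms(1), of y] card_Int_Diff[OF assms(2), of x]
    by (simp_all add: Int_commute)
  moreover have "card (sym_diff x y) = card (x - y) + card (y - x)"
    using assms by (subst card_Un_disjoint) auto
  ultimately show ?thesis by simp
qed

lemma sum_Pow_insert:
  assumes "finite M" "a \<notin> M"
  shows "(\<Sum>T\<in>Pow (insert a M). h T) = (\<Sum>T\<in>Pow M. h T) + (\<Sum>T\<in>Pow M. h (insert a T))"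
proof -
  have "inj_on (insert a) (Pow M)"
    using assms(2) by (intro inj_onI) (metis PowD insert_ident subsetD)
  then show ?thesis
    unfolding Pow_insert using assms
    by (subst sum.union_disjoint) (auto simp: sum.reindex)
qed

definition walsh :: "'a set \<Rightarrow> 'a set \<Rightarrow> real" where
  "walsh S x = (-1) ^ card (S \<inter> x)"

lemma walsh_commute: "walsh S x = walsh x S"
  unfolding walsh_def by (simp add: Int_commute)

lemma walsh_empty [simp]: "walsh {} x = 1"
  by (simp add: walsh_def)

lemma walsh_nonzero [simp]: "walsh S x \<noteq> 0"
  by (simp add: walsh_def)

lemma walsh_singleton: "walsh {i} x = (if i \<in> x then -1 else 1)"
  by (simp add: walsh_def)

lemma walsh_insert:
  assumes "finite T" "a \<notin> T"
  shows "walsh (insert a T) x = (if a \<in> x then -1 else 1) * walsh T x"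
  using assms by (simp add: walsh_def Int_insert_left)

lemma walsh_subset: "x \<subseteq> N \<Longrightarrow> walsh N x = (-1) ^ card x"
  by (simp add: walsh_def Int_absorb1)

lemma walsh_mult:
  assumes "finite x" "finite y"
  shows "walsh S x * walsh S y = walsh S (sym_diff x y)"
proof -
  have "sym_diff (S \<inter> x) (S \<inter> y) = S \<inter> sym_diff x y" "S \<inter> x \<inter> (S \<inter> y) = S \<inter> x \<inter> y"
    by auto
  then have "card (S \<inter> x) + card (S \<inter> y) = card (S \<inter> sym_diff x y) + 2 * card (S \<inter> x \<inter> y)"
    using card_sym_diff_parity[of "S \<inter> x" "S \<inter> y"] assms by simp
  then have "(-1::real) ^ (card (S \<inter> x) + card (S \<inter> y)) = (-1) ^ card (S \<inter> sym_diff x y)"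
    by (simp add: power_add power_mult)
  then show ?thesis
    by (simp add: walsh_def power_add)
qed

lemma walsh_Diff:
  assumes "finite N" "T \<subseteq> N" "finite x"
  shows "walsh (N - T) x = walsh N x * walsh T x"
proof -
  have "N - T = sym_diff N T"
    using assms(2) by auto
  then show ?thesis
    using walsh_mult[of N T x] assms by (simp add: walsh_commute finite_subset)
qed

lemma walsh_Diff_even:
  assumes "finite N" "S \<subseteq> N" "x \<subseteq> N" "even (card x)"
  shows "walsh (N - S) x = walsh S x"
  using assms walsh_Diff[of N S x] by (simp add: walsh_subset finite_subset)

lemma sum_walsh:
  assumes "finite N" "w \<subseteq> N"
  shows "(\<Sum>S\<in>Pow N. walsh S w) = (if w = {} then 2 ^ card N else 0)"
proof (cases "w = {}")
  case True
  then show ?thesis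
    using assms by (simp add: walsh_def card_Pow)
next
  case False
  then obtain a where a: "a \<in> w"
    by auto
  define M where "M = N - {a}"
  have N: "N = insert a M" "finite M" "a \<notin> M"
    using a assms by (auto simp: M_def)
  have "walsh (insert a T) w = - walsh T w" if "T \<in> Pow M" for T
    using that a N finite_subset[of T M] by (subst walsh_insert) auto
  then show ?thesis
    using False by (simp add: N(1) sum_Pow_insert[OF N(2,3)] sum_negf)
qed

definition krawtchouk_sum :: "'a set \<Rightarrow> nat \<Rightarrow> 'a set \<Rightarrow> real" where
  "krawtchouk_sum N k S = (\<Sum>T\<in>Pow N. if card T = k then walsh T S else 0)"

lemma krawtchouk_sum_insert:
  assumes "finite M" "a \<notin> M"
  shows "krawtchouk_sum (insert a M) k S = krawtchouk_sum M k S
           + (if k = 0 then 0 else (if a \<in> S then -1 else 1) * krawtchouk_sum M (k - 1) S)"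
proof -
  have "(if card (insert a T) = k then walsh (insert a T) S else 0)
        = (if a \<in> S then -1 else 1) * (if k \<noteq> 0 \<and> card T = k - 1 then walsh T S else 0)"
    if "T \<in> Pow M" for T
  proof -
    have "finite T" "a \<notin> T"
      using that assms finite_subset[of T M] by auto
    then show ?thesis
      by (cases k) (auto simp: walsh_insert)
  qed
  then show ?thesis
    unfolding krawtchouk_sum_def sum_Pow_insert[OF assms]
    by (simp add: sum_distrib_left)
qed

lemma krawtchouk_sum_Diff:
  assumes "finite N" "S \<subseteq> N"
  shows "krawtchouk_sum N k (N - S) = (-1) ^ k * krawtchouk_sum N k S"
  unfolding krawtchouk_sum_def sum_distrib_left
proof (rule sum.cong)
  fix T assume "T \<in> Pow N"
  then have "walsh (N - S) T = walsh N T * walsh S T" "walsh N T = (-1) ^ card T"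
    using assms by (auto simp: walsh_Diff finite_subset walsh_subset)
  then have "walsh T (N - S) = (-1) ^ card T * walsh T S"
    by (simp add: walsh_commute)
  then show "(if card T = k then walsh T (N - S) else 0)
             = (-1) ^ k * (if card T = k then walsh T S else 0)"
    by simp
qed simp

lemma krawtchouk_sum_complement:
  assumes "finite N" "k \<le> card N" "finite S"
  shows "krawtchouk_sum N (card N - k) S = walsh N S * krawtchouk_sum N k S"
proof -
  have "walsh N S * (if card (N - T) = k then walsh (N - T) S else 0)
        = (if card T = card N - k then walsh T S else 0)" if T: "T \<subseteq> N" for T
  proof -
    have "card (N - T) = card N - card T" "card T \<le> card N"
      using T assms(1) by (simp_all add: card_Diff_subset finite_subset card_mono)
    then have "card T = card N - k \<longleftrightarrow> card (N - T) = k"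
      using assms(2) by linarith
    moreover have "walsh (N - T) S = walsh N S * walsh T S"
      using T assms by (simp add: walsh_Diff)
    moreover have "walsh N S * walsh N S = 1"
      by (simp add: walsh_def flip: power_add)
    ultimately show ?thesis
      by (simp add: mult.assoc[symmetric])
  qed
  then show ?thesis
    unfolding krawtchouk_sum_def sum_distrib_left
    by (intro sum.reindex_bij_witness[of _ "\<lambda>T. N - T" "\<lambda>T. N - T"]) auto
qed

section \<open>Krawtchouk numbers\<close>

text \<open>The recursion deletes one coordinate of the cube; when \<open>s > 0\<close> it is taken inside
  the support of the character, which is what makes \<open>krawtchouk_sum\<close> computable from
  cardinalities alone.\<close>
fun krawtchouk :: "nat \<Rightarrow> nat \<Rightarrow> nat \<Rightarrow> int" where
  "krawtchouk 0 k s = (if k = 0 then 1 else 0)"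
| "krawtchouk (Suc m) k s =
     (if s = 0 then krawtchouk m k 0 + (if k = 0 then 0 else krawtchouk m (k - 1) 0)
      else krawtchouk m k (s - 1) - (if k = 0 then 0 else krawtchouk m (k - 1) (s - 1)))"

lemma krawtchouk_sum_eq_krawtchouk:
  "finite N \<Longrightarrow> krawtchouk_sum N k S = krawtchouk (card N) k (card (S \<inter> N))"
proof (induction "card N" arbitrary: N k)
  case 0
  then have "N = {}"
    by simp
  then show ?case
    by (simp add: krawtchouk_sum_def)
next
  case (Suc m)
  have "N \<noteq> {}"
    using Suc.hyps(2) by auto
  then obtain a where a: "a \<in> N" "S \<inter> N \<noteq> {} \<Longrightarrow> a \<in> S"
    by (cases "S \<inter> N = {}") blast+
  define M where "M = N - {a}"
  have M: "N = insert a M" "finite M" "a \<notin> M" "card M = m"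
    using a Suc.hyps(2) Suc.prems by (auto simp: M_def)
  have IH: "krawtchouk_sum M j S = krawtchouk m j (card (S \<inter> M))" for j
    using Suc.hyps(1)[of M] M by simp
  have step: "krawtchouk_sum N k S = krawtchouk_sum M k S
      + (if k = 0 then 0 else (if a \<in> S then -1 else 1) * krawtchouk_sum M (k - 1) S)"
    unfolding M(1) by (rule krawtchouk_sum_insert[OF M(2,3)])
  show ?case
  proof (cases "S \<inter> N = {}")
    case True
    then have "S \<inter> M = {}" "a \<notin> S"
      using a(1) unfolding M_def by blast+
    then show ?thesis
      using True step by (simp add: IH flip: Suc.hyps(2))
  next
    case False
    then have aS: "a \<in> S"
      using a(2) by blast
    then have "S \<inter> N = insert a (S \<inter> M)"
      using a(1) unfolding M_def by blast
    then have "card (S \<inter> N) = Suc (card (S \<inter> M))"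
      using M(2,3) by simp
    then show ?thesis
      using step aS by (simp add: IH flip: Suc.hyps(2))
  qed
qed

lemma krawtchouk_sum_lessThan:
  "s \<le> n \<Longrightarrow> krawtchouk_sum {..<n} k {..<s} = of_int (krawtchouk n k s)"
  by (simp add: krawtchouk_sum_eq_krawtchouk Int_absorb2)

lemma krawtchouk_Suc_outside:
  assumes "s \<le> m"
  shows "krawtchouk (Suc m) k s = krawtchouk m k s + (if k = 0 then 0 else krawtchouk m (k - 1) s)"
proof -
  have "krawtchouk_sum {..<Suc m} k {..<s} = krawtchouk_sum {..<m} k {..<s}
          + (if k = 0 then 0 else krawtchouk_sum {..<m} (k - 1) {..<s})"
    using krawtchouk_sum_insert[of "{..<m}" m k "{..<s}"] assms by (simp add: lessThan_Suc)
  then have "real_of_int (krawtchouk (Suc m) k s)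
             = of_int (krawtchouk m k s + (if k = 0 then 0 else krawtchouk m (k - 1) s))"
    using assms by (simp add: krawtchouk_sum_lessThan del: krawtchouk.simps)
  then show ?thesis
    by (simp only: of_int_eq_iff)
qed

lemma krawtchouk_reflect:
  assumes "s \<le> n"
  shows "krawtchouk n k (n - s) = (-1) ^ k * krawtchouk n k s"
proof -
  have "{..<n} - {..<s} = {s..<n}" "{s..<n} \<inter> {..<n} = {s..<n}"
    by auto
  then have "krawtchouk_sum {..<n} k {s..<n} = of_int (krawtchouk n k (n - s))"
    by (simp add: krawtchouk_sum_eq_krawtchouk)
  then have "real_of_int (krawtchouk n k (n - s)) = of_int ((-1) ^ k * krawtchouk n k s)"
    using krawtchouk_sum_Diff[of "{..<n}" "{..<s}" k] \<open>{..<n} - {..<s} = {s..<n}\<close> assms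
    by (simp add: krawtchouk_sum_lessThan)
  then show ?thesis
    by (simp only: of_int_eq_iff)
qed

lemma krawtchouk_complement:
  assumes "k \<le> n" "s \<le> n"
  shows "krawtchouk n (n - k) s = (-1) ^ s * krawtchouk n k s"
proof -
  have "walsh {..<n} {..<s} = (-1) ^ s"
    using assms(2) by (simp add: walsh_subset)
  then have "real_of_int (krawtchouk n (n - k) s) = of_int ((-1) ^ s * krawtchouk n k s)"
    using krawtchouk_sum_complement[of "{..<n}" k "{..<s}"] assms
    by (simp add: krawtchouk_sum_lessThan)
  then show ?thesis
    by (simp only: of_int_eq_iff)
qed

lemma krawtchouk_at_zero: "krawtchouk n k 0 = int (n choose k)"
proof (induction n arbitrary: k)
  case (Suc n)
  then show ?case
    by (cases k) auto
qed simp

lemma krawtchouk_degree_zero: "krawtchouk n 0 s = 1"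
  by (induction n arbitrary: s) auto

lemma krawtchouk_degree_one: "s \<le> n \<Longrightarrow> krawtchouk n 1 s = int n - 2 * int s"
  by (induction n arbitrary: s)
    (auto simp: krawtchouk_at_zero krawtchouk_degree_zero split: nat.split)

lemma krawtchouk_at_one:
  "1 \<le> n \<Longrightarrow> 1 \<le> k \<Longrightarrow> krawtchouk n k 1 = int ((n - 1) choose k) - int ((n - 1) choose (k - 1))"
  by (cases n) (auto simp: krawtchouk_at_zero)

lemma krawtchouk_at_one_nonneg: "2 * j < n \<Longrightarrow> 0 \<le> krawtchouk n j 1"
proof (cases "j = 0")
  case False
  assume "2 * j < n"
  then have "(n - 1) choose (j - 1) \<le> (n - 1) choose j"
    by (intro binomial_mono) auto
  then show ?thesis
    using krawtchouk_at_one[of n j] False \<open>2 * j < n\<close> by simp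
qed (simp add: krawtchouk_degree_zero)

lemma krawtchouk_middle_odd: "odd s \<Longrightarrow> s \<le> 2 * j \<Longrightarrow> krawtchouk (2 * j) j s = 0"
  using krawtchouk_complement[of j "2 * j" s] by simp

lemma krawtchouk_odd_length_middle:
  assumes "1 \<le> j" "1 \<le> s" "s < 2 * j"
  obtains r where "1 \<le> r" "r < 2 * j"
    "\<bar>krawtchouk (Suc (2 * j)) j s\<bar> = \<bar>krawtchouk (2 * j) (j - 1) r\<bar>"
proof (cases "odd s")
  case True
  then have "krawtchouk (Suc (2 * j)) j s = krawtchouk (2 * j) (j - 1) s"
    using krawtchouk_Suc_outside[of s "2 * j" j] krawtchouk_middle_odd[of s j] assms by simp
  then show ?thesis
    using that[of s] assms by simp
next
  case False
  then have "2 \<le> s"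
    using assms(2) by presburger
  then have "krawtchouk (Suc (2 * j)) j s = - krawtchouk (2 * j) (j - 1) (s - 1)"
    using krawtchouk_middle_odd[of "s - 1" j] False assms by simp
  then show ?thesis
    using that[of "s - 1"] \<open>2 \<le> s\<close> assms by simp
qed

lemma krawtchouk_abs_le_at_one:
  "2 * j < n \<Longrightarrow> 1 \<le> s \<Longrightarrow> s \<le> n - 1 \<Longrightarrow> \<bar>krawtchouk n j s\<bar> \<le> krawtchouk n j 1"
proof (induction n arbitrary: j s)
  case (Suc m)
  show ?case
  proof (cases "j = 0 \<or> s = m")
    case True
    then show ?thesis
      using krawtchouk_reflect[of 1 "Suc m" j] krawtchouk_at_one_nonneg[OF Suc.prems(1)]
      by (auto simp: krawtchouk_degree_zero abs_mult)
  next
    case False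
    then have j: "j \<noteq> 0" and s: "1 \<le> s" "s \<le> m - 1"
      using Suc.prems by auto
    have step_1: "krawtchouk (Suc m) j 1 = krawtchouk m j 1 + krawtchouk m (j - 1) 1"
      using krawtchouk_Suc_outside[of 1 m j] s j by auto
    have IH_pred: "\<bar>krawtchouk m (j - 1) r\<bar> \<le> krawtchouk m (j - 1) 1" if "1 \<le> r" "r \<le> m - 1" for r
      using Suc.IH[of "j - 1" r] Suc.prems that j by simp
    show ?thesis
    proof (cases "2 * j < m")
      case True
      have "krawtchouk (Suc m) j s = krawtchouk m j s + krawtchouk m (j - 1) s"
        using krawtchouk_Suc_outside[of s m j] s j by auto
      moreover have "\<bar>krawtchouk m j s\<bar> \<le> krawtchouk m j 1"
        using Suc.IH[of j s] True s by simp
      ultimately show ?thesis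
        using step_1 IH_pred[OF s] by linarith
    next
      case False
      then have m: "m = 2 * j"
        using Suc.prems by simp
      then have "krawtchouk m j 1 = 0"
        using krawtchouk_middle_odd[of 1 j] j by simp
      moreover obtain r where r: "1 \<le> r" "r < 2 * j"
        "\<bar>krawtchouk (Suc (2 * j)) j s\<bar> = \<bar>krawtchouk (2 * j) (j - 1) r\<bar>"
        by (rule krawtchouk_odd_length_middle[of j s]) (use j s m in auto)
      moreover have "\<bar>krawtchouk m (j - 1) r\<bar> \<le> krawtchouk m (j - 1) 1"
        using m r(1,2) by (intro IH_pred) auto
      ultimately show ?thesis
        using step_1 m by (simp del: krawtchouk.simps)
    qed
  qed
qed simp

lemma krawtchouk_abs_less_at_one:
  "2 * j + 2 \<le> n \<Longrightarrow> 1 \<le> j \<Longrightarrow> 2 \<le> s \<Longrightarrow> s \<le> n - 2 \<Longrightarrow> \<bar>krawtchouk n j s\<bar> < krawtchouk n j 1"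
proof (induction n arbitrary: j s)
  case (Suc m)
  show ?case
  proof (cases "j = 1")
    case True
    then show ?thesis
      using krawtchouk_degree_one[of s "Suc m"] krawtchouk_degree_one[of 1 "Suc m"] Suc.prems
      by auto
  next
    case False
    then have j: "2 \<le> j"
      using Suc.prems by simp
    have step: "\<bar>krawtchouk (Suc m) j r\<bar> < krawtchouk (Suc m) j 1" if r: "2 \<le> r" "r \<le> m - 2" for r
    proof -
      have "krawtchouk (Suc m) j r = krawtchouk m j r + krawtchouk m (j - 1) r"
        and "krawtchouk (Suc m) j 1 = krawtchouk m j 1 + krawtchouk m (j - 1) 1"
        using krawtchouk_Suc_outside[of r m j] krawtchouk_Suc_outside[of 1 m j] r j by auto
      moreover have "\<bar>krawtchouk m (j - 1) r\<bar> < krawtchouk m (j - 1) 1"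
        using Suc.IH[of "j - 1" r] Suc.prems r j by simp
      moreover have "\<bar>krawtchouk m j r\<bar> \<le> krawtchouk m j 1"
        using krawtchouk_abs_le_at_one[of j m r] Suc.prems r j by simp
      ultimately show ?thesis
        by linarith
    qed
    show ?thesis
    proof (cases "s = m - 1")
      case True
      then have "\<bar>krawtchouk (Suc m) j s\<bar> = \<bar>krawtchouk (Suc m) j 2\<bar>"
        using krawtchouk_reflect[of 2 "Suc m" j] Suc.prems by (simp add: abs_mult)
      then show ?thesis
        using step[of 2] Suc.prems j by simp
    next
      case False
      then show ?thesis
        using step[of s] Suc.prems by simp
    qed
  qed
qed simp

lemma krawtchouk_at_last: "even k \<Longrightarrow> krawtchouk n k n = int (n choose k)"
  using krawtchouk_reflect[of 0 n k] by (simp add: krawtchouk_at_zero)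

text \<open>For even \<open>k > n/2\<close> the reflection \<open>k \<mapsto> n - k\<close> turns the two bounds above into
  lower bounds at \<open>s = 1\<close>.\<close>
lemma krawtchouk_reflect_degree:
  assumes "even k" "k \<le> n" "s \<le> n"
  shows "krawtchouk n k s = (-1) ^ s * krawtchouk n (n - k) s"
  using krawtchouk_complement[of "n - k" n s] assms by simp

lemma krawtchouk_at_one_le:
  assumes "even k" "n < 2 * k" "k \<le> n" "s \<le> n"
  shows "krawtchouk n k 1 \<le> krawtchouk n k s"
proof -
  let ?j = "n - k"
  have at_one: "krawtchouk n k 1 = - krawtchouk n ?j 1" "0 \<le> krawtchouk n ?j 1"
    using krawtchouk_reflect_degree[of k n 1] krawtchouk_at_one_nonneg[of ?j n] assms by simp_all
  have ends: "krawtchouk n k s = int (n choose k)" if "s = 0 \<or> s = n"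
    using that krawtchouk_at_zero krawtchouk_at_last[OF assms(1)] by auto
  show ?thesis
  proof (cases "s = 0 \<or> s = n")
    case True
    then show ?thesis
      using at_one ends[OF True] by simp
  next
    case False
    then have "\<bar>krawtchouk n ?j s\<bar> \<le> krawtchouk n ?j 1"
      using assms by (intro krawtchouk_abs_le_at_one) auto
    moreover have "\<bar>krawtchouk n k s\<bar> = \<bar>krawtchouk n ?j s\<bar>"
      using krawtchouk_reflect_degree[OF assms(1,3,4)] by (simp add: abs_mult)
    ultimately show ?thesis
      using at_one abs_ge_minus_self[of "krawtchouk n k s"] by linarith
  qed
qed

lemma krawtchouk_at_one_less:
  assumes "even k" "n + 2 \<le> 2 * k" "k < n" "s \<le> n" "s \<noteq> 1" "s \<noteq> n - 1"
  shows "krawtchouk n k 1 < krawtchouk n k s"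
proof -
  let ?j = "n - k"
  have at_one: "krawtchouk n k 1 = - krawtchouk n ?j 1" "0 \<le> krawtchouk n ?j 1"
    using krawtchouk_reflect_degree[of k n 1] krawtchouk_at_one_nonneg[of ?j n] assms by simp_all
  have "0 < int (n choose k)"
    using assms by simp
  have ends: "krawtchouk n k s = int (n choose k)" if "s = 0 \<or> s = n"
    using that krawtchouk_at_zero krawtchouk_at_last[OF assms(1)] by auto
  show ?thesis
  proof (cases "s = 0 \<or> s = n")
    case True
    then show ?thesis
      using at_one ends[OF True] \<open>0 < int (n choose k)\<close> by linarith
  next
    case False
    then have "\<bar>krawtchouk n ?j s\<bar> < krawtchouk n ?j 1"
      using assms by (intro krawtchouk_abs_less_at_one) auto
    moreover have "\<bar>krawtchouk n k s\<bar> = \<bar>krawtchouk n ?j s\<bar>"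
      using krawtchouk_reflect_degree[OF assms(1) _ assms(4)] assms(3) by (simp add: abs_mult)
    ultimately show ?thesis
      using at_one abs_ge_minus_self[of "krawtchouk n k s"] by linarith
  qed
qed

lemma krawtchouk_at_one_eq:
  assumes "1 \<le> k" "k \<le> n"
  shows "real_of_int (krawtchouk n k 1) = (real n - 2 * real k) / real n * real (n choose k)"
proof -
  have "real k * real (n choose k) = real n * real ((n - 1) choose (k - 1))"
    using arg_cong[OF times_binomial_minus1_eq[of k n], of real] assms by simp
  moreover have "(real n - real k) * real (n choose k) = real n * real ((n - 1) choose k)"
    using arg_cong[OF binomial_absorb_comp[of n k], of real] assms by (simp add: of_nat_diff)
  moreover have "real n * real_of_int (krawtchouk n k 1)
      = real n * real ((n - 1) choose k) - real n * real ((n - 1) choose (k - 1))"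
    using krawtchouk_at_one[of n k] assms by (simp add: right_diff_distrib)
  ultimately have "real n * real_of_int (krawtchouk n k 1)
      = (real n - 2 * real k) * real (n choose k)"
    by (simp add: algebra_simps)
  then show ?thesis
    using assms by (simp add: field_simps)
qed

section \<open>The Walsh transform on the cube\<close>

definition walsh_transform :: "'a set \<Rightarrow> ('a set \<Rightarrow> real) \<Rightarrow> 'a set \<Rightarrow> real" where
  "walsh_transform N g S = (\<Sum>x\<in>Pow N. walsh S x * g x)"

definition hamming_adj :: "nat \<Rightarrow> 'a set \<Rightarrow> 'a set \<Rightarrow> real" where
  "hamming_adj k x y = (if card (sym_diff x y) = k then 1 else 0)"

lemma hamming_adj_commute: "hamming_adj k x y = hamming_adj k y x"
  by (simp add: hamming_adj_def Un_commute)

lemma sym_diff_cancel_left: "sym_diff x (sym_diff x y) = y"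
  by blast

lemma sum_Pow_sym_diff_shift:
  "x \<subseteq> N \<Longrightarrow> (\<Sum>y\<in>Pow N. h y) = (\<Sum>T\<in>Pow N. h (sym_diff x T))"
  by (rule sum.reindex_bij_witness[of _ "sym_diff x" "sym_diff x"])
    (blast, blast, blast, blast, simp only: sym_diff_cancel_left)

lemma walsh_inversion:
  assumes "finite N" "x \<subseteq> N"
  shows "(\<Sum>S\<in>Pow N. walsh S x * walsh_transform N g S) = 2 ^ card N * g x"
proof -
  have "(\<Sum>S\<in>Pow N. walsh S x * walsh_transform N g S)
        = (\<Sum>y\<in>Pow N. g y * (\<Sum>S\<in>Pow N. walsh S x * walsh S y))"
    unfolding walsh_transform_def sum_distrib_left
    by (subst sum.swap) (simp add: mult_ac)
  also have "\<dots> = (\<Sum>y\<in>Pow N. if y = x then 2 ^ card N * g y else 0)"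
  proof (rule sum.cong)
    fix y assume y: "y \<in> Pow N"
    have "walsh S x * walsh S y = walsh S (sym_diff x y)" for S
      using y assms finite_subset[of _ N] by (simp add: walsh_mult)
    moreover have "sym_diff x y = {} \<longleftrightarrow> y = x"
      by blast
    moreover have "sym_diff x y \<subseteq> N"
      using y assms(2) by blast
    ultimately show "g y * (\<Sum>S\<in>Pow N. walsh S x * walsh S y)
                     = (if y = x then 2 ^ card N * g y else 0)"
      using sum_walsh[OF assms(1), of "sym_diff x y"] by (simp add: card_Pow)
  qed simp
  also have "\<dots> = 2 ^ card N * g x"
    using assms by simp
  finally show ?thesis .
qed

lemma walsh_parseval:
  assumes "finite N"
  shows "(\<Sum>S\<in>Pow N. walsh_transform N h S * walsh_transform N g S)
         = 2 ^ card N * (\<Sum>x\<in>Pow N. h x * g x)"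
proof -
  have "(\<Sum>S\<in>Pow N. walsh_transform N h S * walsh_transform N g S)
        = (\<Sum>S\<in>Pow N. \<Sum>x\<in>Pow N. h x * (walsh S x * walsh_transform N g S))"
    unfolding walsh_transform_def[of N h] sum_distrib_right by (simp add: mult_ac)
  also have "\<dots> = (\<Sum>x\<in>Pow N. h x * (\<Sum>S\<in>Pow N. walsh S x * walsh_transform N g S))"
    by (subst sum.swap) (simp add: sum_distrib_left)
  also have "\<dots> = (\<Sum>x\<in>Pow N. h x * (2 ^ card N * g x))"
    using walsh_inversion[OF assms] by simp
  finally show ?thesis
    by (simp add: sum_distrib_left mult_ac)
qed

lemma hamming_adj_walsh:
  assumes "finite N" "x \<subseteq> N"
  shows "(\<Sum>y\<in>Pow N. hamming_adj k x y * walsh S y) = krawtchouk_sum N k S * walsh S x"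
proof -
  have "(\<Sum>y\<in>Pow N. hamming_adj k x y * walsh S y)
        = (\<Sum>T\<in>Pow N. hamming_adj k x (sym_diff x T) * walsh S (sym_diff x T))"
    using sum_Pow_sym_diff_shift[OF assms(2)] .
  also have "\<dots> = (\<Sum>T\<in>Pow N. walsh S x * (if card T = k then walsh T S else 0))"
  proof (rule sum.cong)
    fix T assume "T \<in> Pow N"
    then have "walsh S (sym_diff x T) = walsh S x * walsh T S"
      using assms finite_subset[of _ N] by (simp add: walsh_commute walsh_mult[symmetric])
    then show "hamming_adj k x (sym_diff x T) * walsh S (sym_diff x T)
                     = walsh S x * (if card T = k then walsh T S else 0)"
      by (simp only: hamming_adj_def sym_diff_cancel_left) simp
  qed simp
  finally show ?thesis
    by (simp add: krawtchouk_sum_def sum_distrib_left mult.commute)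
qed

lemma walsh_transform_hamming:
  assumes "finite N"
  shows "walsh_transform N (\<lambda>x. \<Sum>y\<in>Pow N. hamming_adj k x y * g y) S
         = krawtchouk_sum N k S * walsh_transform N g S"
proof -
  have "walsh_transform N (\<lambda>x. \<Sum>y\<in>Pow N. hamming_adj k x y * g y) S
        = (\<Sum>y\<in>Pow N. g y * (\<Sum>x\<in>Pow N. hamming_adj k y x * walsh S x))"
    unfolding walsh_transform_def sum_distrib_left sum_distrib_right
    by (subst sum.swap) (simp add: mult_ac hamming_adj_commute)
  also have "\<dots> = (\<Sum>y\<in>Pow N. g y * (krawtchouk_sum N k S * walsh S y))"
    using hamming_adj_walsh[OF assms] by simp
  finally show ?thesis
    by (simp add: walsh_transform_def sum_distrib_left mult_ac)
qed

lemma hamming_quadratic_form: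
  assumes "finite N"
  shows "(\<Sum>x\<in>Pow N. (\<Sum>y\<in>Pow N. hamming_adj k x y * g y) * g x)
         = (\<Sum>S\<in>Pow N. krawtchouk_sum N k S * (walsh_transform N g S)\<^sup>2) / 2 ^ card N"
  using walsh_parseval[OF assms, of "\<lambda>x. \<Sum>y\<in>Pow N. hamming_adj k x y * g y" g]
  by (simp add: walsh_transform_hamming[OF assms] power2_eq_square mult.assoc)

section \<open>Eigenvalues of the half cube graph\<close>

lemma Hverts_eq: "Hverts n = {x \<in> Pow {..<n}. even (card x)}"
  by (auto simp: Hverts_def)

lemma Hverts_finite: "finite (Hverts n)"
  by (simp add: Hverts_eq)

lemma Hadj_mat_eq_hamming_adj: "Hadj_mat n k = hamming_adj k"
  by (simp add: fun_eq_iff Hadj_mat_def Hadj_def hamming_adj_def)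

lemma hamming_adj_opposite_parity:
  assumes "even k" "finite x" "finite y" "even (card x) \<noteq> even (card y)"
  shows "hamming_adj k x y = 0"
proof -
  have "odd (card (sym_diff x y))"
    using card_sym_diff_parity[OF assms(2,3)] assms(4) by presburger
  then show ?thesis
    using assms(1) by (auto simp: hamming_adj_def)
qed

definition zero_extension :: "'a set \<Rightarrow> ('a \<Rightarrow> real) \<Rightarrow> 'a \<Rightarrow> real" where
  "zero_extension V f x = (if x \<in> V then f x else 0)"

lemma sum_zero_extension:
  "V \<subseteq> U \<Longrightarrow> finite U \<Longrightarrow> (\<Sum>x\<in>U. h x * zero_extension V f x) = (\<Sum>x\<in>V. h x * f x)"
  unfolding zero_extension_def by (rule sum.mono_neutral_cong_right) auto

lemma hamming_adj_zero_extension: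
  assumes "even k" "x \<subseteq> {..<n}"
  shows "(\<Sum>y\<in>Pow {..<n}. hamming_adj k x y * zero_extension (Hverts n) f y)
         = zero_extension (Hverts n) (\<lambda>x. \<Sum>y\<in>Hverts n. Hadj_mat n k x y * f y) x"
proof (cases "x \<in> Hverts n")
  case True
  have "Hverts n \<subseteq> Pow {..<n}"
    by (auto simp: Hverts_eq)
  then show ?thesis
    using True sum_zero_extension[of "Hverts n" "Pow {..<n}" "hamming_adj k x" f]
    by (simp add: Hadj_mat_eq_hamming_adj zero_extension_def[of _ _ x])
next
  case False
  have "hamming_adj k x y * zero_extension (Hverts n) f y = 0" for y
    using False assms by (cases "y \<in> Hverts n")
      (auto simp: zero_extension_def Hverts_eq finite_subset intro: hamming_adj_opposite_parity)
  then have "(\<Sum>y\<in>Pow {..<n}. hamming_adj k x y * zero_extension (Hverts n) f y) = 0"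
    by (intro sum.neutral ballI)
  then show ?thesis
    using False by (simp add: zero_extension_def[of _ _ x])
qed

lemma Hverts_adj_walsh_eq:
  assumes "even k" "S \<subseteq> {..<n}" "x \<in> Hverts n"
  shows "(\<Sum>y\<in>Hverts n. Hadj_mat n k x y * walsh S y) = of_int (krawtchouk n k (card S)) * walsh S x"
proof -
  have "hamming_adj k x y = 0" if "y \<in> Pow {..<n} - Hverts n" for y
    using that assms by (intro hamming_adj_opposite_parity) (auto simp: Hverts_eq finite_subset)
  then have "(\<Sum>y\<in>Hverts n. Hadj_mat n k x y * walsh S y)
             = (\<Sum>y\<in>Pow {..<n}. hamming_adj k x y * walsh S y)"
    unfolding Hadj_mat_eq_hamming_adj by (intro sum.mono_neutral_left) (auto simp: Hverts_eq)
  also have "\<dots> = of_int (krawtchouk n k (card S)) * walsh S x"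
    using hamming_adj_walsh[of "{..<n}" x k S] krawtchouk_sum_eq_krawtchouk[of "{..<n}" k S] assms
    by (simp add: Hverts_eq Int_absorb2)
  finally show ?thesis .
qed

lemma Hverts_walsh_is_eigenvector:
  "even k \<Longrightarrow> S \<subseteq> {..<n} \<Longrightarrow>
     is_eigenvector (Hverts n) (Hadj_mat n k) (of_int (krawtchouk n k (card S))) (walsh S)"
  unfolding is_eigenvector_def
  using Hverts_adj_walsh_eq[of k S n] by (auto simp: Hverts_def intro!: bexI[of _ "{}"])

text \<open>Since \<open>k\<close> is even, the distance-\<open>k\<close> graph of the whole cube has no edges between even
  and odd sets, so an eigenvector of \<open>H\<^sub>n\<^sub>,\<^sub>k\<close> extended by zero is one of the cube, and
  its Walsh transform lives on characters with the same eigenvalue.\<close>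
lemma Hverts_eigenvector_walsh_support:
  assumes "even k" "is_eigenvector (Hverts n) (Hadj_mat n k) l f" "S \<subseteq> {..<n}"
    and "walsh_transform {..<n} (zero_extension (Hverts n) f) S \<noteq> 0"
  shows "of_int (krawtchouk n k (card S)) = l"
proof -
  let ?g = "zero_extension (Hverts n) f"
  have "(\<Sum>y\<in>Pow {..<n}. hamming_adj k x y * ?g y) = l * ?g x" if "x \<subseteq> {..<n}" for x
    using hamming_adj_zero_extension[OF assms(1) that, of f] assms(2)
    by (simp add: zero_extension_def is_eigenvector_def)
  then have "walsh_transform {..<n} (\<lambda>x. \<Sum>y\<in>Pow {..<n}. hamming_adj k x y * ?g y) S
             = l * walsh_transform {..<n} ?g S"
    by (simp add: walsh_transform_def sum_distrib_left mult_ac)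
  then show ?thesis
    using walsh_transform_hamming[of "{..<n}" k ?g S] krawtchouk_sum_eq_krawtchouk[of "{..<n}" k S]
      assms(3,4)
    by (simp add: Int_absorb2)
qed

lemma walsh_transform_zero_extension_nonzero:
  assumes "x \<in> V" "f x \<noteq> 0" "V \<subseteq> Pow N" "finite N"
  shows "\<exists>S\<in>Pow N. walsh_transform N (zero_extension V f) S \<noteq> 0"
proof (rule ccontr)
  assume "\<not> ?thesis"
  then have "2 ^ card N * zero_extension V f x = 0"
    using walsh_inversion[OF assms(4), of x "zero_extension V f"] assms(1,3) by auto
  then show False
    using assms(1,2) by (simp add: zero_extension_def)
qed

lemma Hverts_eigenvalues:
  assumes "even k"
  shows "{l. is_eigenvalue (Hverts n) (Hadj_mat n k) l} = (\<lambda>s. of_int (krawtchouk n k s)) ` {..n}"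
proof (intro set_eqI iffI)
  fix l assume "l \<in> {l. is_eigenvalue (Hverts n) (Hadj_mat n k) l}"
  then obtain f x where f: "is_eigenvector (Hverts n) (Hadj_mat n k) l f" "x \<in> Hverts n" "f x \<noteq> 0"
    by (auto simp: is_eigenvalue_def is_eigenvector_def)
  then obtain S where S: "S \<subseteq> {..<n}" "walsh_transform {..<n} (zero_extension (Hverts n) f) S \<noteq> 0"
    using walsh_transform_zero_extension_nonzero[of x "Hverts n" f "{..<n}"]
    by (auto simp: Hverts_eq)
  have "l = of_int (krawtchouk n k (card S))"
    using Hverts_eigenvector_walsh_support[OF assms f(1) S] by simp
  moreover have "card S \<in> {..n}"
    using card_mono[OF _ S(1)] by simp
  ultimately show "l \<in> (\<lambda>s. of_int (krawtchouk n k s)) ` {..n}"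
    by (rule image_eqI)
next
  fix l :: real assume "l \<in> (\<lambda>s. of_int (krawtchouk n k s)) ` {..n}"
  then obtain s where "s \<le> n" "l = of_int (krawtchouk n k (card {..<s}))"
    by auto
  then show "l \<in> {l. is_eigenvalue (Hverts n) (Hadj_mat n k) l}"
    using Hverts_walsh_is_eigenvector[OF assms, of "{..<s}" n] by (auto simp: is_eigenvalue_def)
qed

lemma Hverts_lambda_min:
  assumes "even k" "n < 2 * k" "k \<le> n"
  shows "lambda_min (Hverts n) (Hadj_mat n k) = of_int (krawtchouk n k 1)"
  unfolding lambda_min_def Hverts_eigenvalues[OF assms(1)]
proof (rule Min_eqI)
  show "of_int (krawtchouk n k 1) \<in> (\<lambda>s. real_of_int (krawtchouk n k s)) ` {..n}"
    using assms by (intro imageI) simp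
  fix l assume "l \<in> (\<lambda>s. real_of_int (krawtchouk n k s)) ` {..n}"
  then show "of_int (krawtchouk n k 1) \<le> l"
    using krawtchouk_at_one_le[OF assms] by auto
qed simp

lemma sum_Hverts_walsh:
  assumes "w \<subseteq> {..<n}" "n > 0"
  shows "(\<Sum>x\<in>Hverts n. walsh w x) = 2 ^ (n - 1) * (of_bool (w = {}) + of_bool (w = {..<n}))"
proof -
  let ?N = "{..<n::nat}"
  have "(\<Sum>x\<in>Hverts n. walsh w x) = (\<Sum>x\<in>Pow ?N. (walsh x w + walsh x (?N - w)) / 2)"
  proof -
    have "walsh x (?N - w) = (-1) ^ card x * walsh x w" if "x \<in> Pow ?N" for x
    proof -
      have "walsh x (?N - w) = walsh ?N x * walsh w x"
        using that assms(1) walsh_Diff[of ?N w x] finite_subset[of x ?N]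
        by (simp add: walsh_commute)
      then show ?thesis
        using that by (simp add: walsh_subset walsh_commute[of w x])
    qed
    then have pointwise:
        "(if even (card x) then walsh w x else 0) = (walsh x w + walsh x (?N - w)) / 2"
      if "x \<in> Pow ?N" for x
      using that by (simp add: walsh_commute)
    have "(\<Sum>x\<in>Hverts n. walsh w x) = (\<Sum>x\<in>Pow ?N. if even (card x) then walsh w x else 0)"
      unfolding Hverts_eq by (rule sum.inter_filter) simp
    also have "\<dots> = (\<Sum>x\<in>Pow ?N. (walsh x w + walsh x (?N - w)) / 2)"
      by (rule sum.cong[OF refl], rule pointwise)
    finally show ?thesis .
  qed
  also have "\<dots> = ((\<Sum>x\<in>Pow ?N. walsh x w) + (\<Sum>x\<in>Pow ?N. walsh x (?N - w))) / 2"
    by (simp only: sum_divide_distrib[symmetric] sum.distrib)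
  also have "\<dots> = (of_bool (w = {}) + of_bool (w = ?N)) * 2 ^ n / 2"
    using sum_walsh[of ?N w] sum_walsh[of ?N "?N - w"] assms
    by (cases "w = {}"; cases "w = ?N") auto
  finally show ?thesis
    using assms(2) by (simp add: power_eq_if)
qed

lemma Hverts_card:
  assumes "n > 0"
  shows "card (Hverts n) = 2 ^ (n - 1)"
proof -
  have "{} \<noteq> {..<n}"
    using assms by auto
  then have "real (card (Hverts n)) = real (2 ^ (n - 1))"
    using sum_Hverts_walsh[of "{}" n] assms by simp
  then show ?thesis
    by (simp only: of_nat_eq_iff)
qed

lemma Hverts_degree:
  "even k \<Longrightarrow> x \<in> Hverts n \<Longrightarrow> (\<Sum>y\<in>Hverts n. Hadj_mat n k x y) = real (n choose k)"
  using Hverts_adj_walsh_eq[of k "{}" n x] by (simp add: krawtchouk_at_zero)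

lemma Hverts_quadratic_form_ge:
  assumes "even k" "n < 2 * k" "k \<le> n"
  shows "of_int (krawtchouk n k 1) * (\<Sum>x\<in>Hverts n. (f x)\<^sup>2)
         \<le> (\<Sum>x\<in>Hverts n. \<Sum>y\<in>Hverts n. Hadj_mat n k x y * f x * f y)"
proof -
  let ?N = "{..<n::nat}" and ?g = "zero_extension (Hverts n) f"
  have sub: "Hverts n \<subseteq> Pow ?N"
    by (auto simp: Hverts_eq)
  have "(\<Sum>x\<in>Pow ?N. (\<Sum>y\<in>Pow ?N. hamming_adj k x y * ?g y) * ?g x)
        = (\<Sum>x\<in>Pow ?N. zero_extension (Hverts n) (\<lambda>x. \<Sum>y\<in>Hverts n. Hadj_mat n k x y * f y) x * ?g x)"
    by (intro sum.cong refl) (simp add: hamming_adj_zero_extension[OF assms(1)])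
  also have "\<dots> = (\<Sum>x\<in>Hverts n. (\<Sum>y\<in>Hverts n. Hadj_mat n k x y * f y) * f x)"
    using sum_zero_extension[OF sub,
        of "zero_extension (Hverts n) (\<lambda>x. \<Sum>y\<in>Hverts n. Hadj_mat n k x y * f y)" f]
    by (simp add: zero_extension_def)
  finally have "(\<Sum>x\<in>Hverts n. \<Sum>y\<in>Hverts n. Hadj_mat n k x y * f x * f y)
        = (\<Sum>x\<in>Pow ?N. (\<Sum>y\<in>Pow ?N. hamming_adj k x y * ?g y) * ?g x)"
    by (simp add: sum_distrib_left sum_distrib_right mult_ac)
  also have "\<dots> = (\<Sum>S\<in>Pow ?N. krawtchouk_sum ?N k S * (walsh_transform ?N ?g S)\<^sup>2) / 2 ^ n"
    by (simp add: hamming_quadratic_form)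
  also have "\<dots> \<ge> (\<Sum>S\<in>Pow ?N. of_int (krawtchouk n k 1) * (walsh_transform ?N ?g S)\<^sup>2) / 2 ^ n"
  proof (intro divide_right_mono sum_mono mult_right_mono)
    fix S assume "S \<in> Pow ?N"
    then show "of_int (krawtchouk n k 1) \<le> krawtchouk_sum ?N k S"
      using krawtchouk_at_one_le[OF assms, of "card S"] card_mono[of ?N S]
      by (simp add: krawtchouk_sum_eq_krawtchouk Int_absorb2)
  qed simp_all
  also have "(\<Sum>S\<in>Pow ?N. of_int (krawtchouk n k 1) * (walsh_transform ?N ?g S)\<^sup>2) / 2 ^ n
             = of_int (krawtchouk n k 1) * (\<Sum>x\<in>Hverts n. (f x)\<^sup>2)"
    using walsh_parseval[of ?N ?g ?g] sum_zero_extension[OF sub, of ?g f]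
    by (simp add: sum_distrib_left[symmetric] power2_eq_square zero_extension_def)
  finally show ?thesis .
qed

section \<open>Vector colourings\<close>

lemma vector_coloring_hoffman_bound:
  fixes A :: "'v \<Rightarrow> 'v \<Rightarrow> real"
  assumes "finite V" "V \<noteq> {}"
    and adj: "\<And>x y. A x y = (if E x y then 1 else 0)"
    and degree: "\<And>x. x \<in> V \<Longrightarrow> (\<Sum>y\<in>V. A x y) = d"
    and quadratic_form: "\<And>f. lam * (\<Sum>x\<in>V. (f x)\<^sup>2) \<le> (\<Sum>x\<in>V. \<Sum>y\<in>V. A x y * f x * f y)"
    and "lam < 0"
    and "vector_coloring V E t m p"
  shows "1 - d / lam \<le> t"
proof -
  have t: "t \<ge> 2" and unit: "\<And>x. x \<in> V \<Longrightarrow> (\<Sum>i<m. (p x i)\<^sup>2) = 1"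
    and edge: "\<And>x y. x \<in> V \<Longrightarrow> y \<in> V \<Longrightarrow> E x y \<Longrightarrow> (\<Sum>i<m. p x i * p y i) \<le> - 1 / (t - 1)"
    using assms(7) unfolding vector_coloring_def by auto
  have "(\<Sum>i<m. \<Sum>x\<in>V. (p x i)\<^sup>2) = card V"
    by (subst sum.swap) (simp add: unit)
  then have "lam * card V = (\<Sum>i<m. lam * (\<Sum>x\<in>V. (p x i)\<^sup>2))"
    by (simp add: sum_distrib_left[symmetric])
  also have "\<dots> \<le> (\<Sum>i<m. \<Sum>x\<in>V. \<Sum>y\<in>V. A x y * p x i * p y i)"
    by (intro sum_mono quadratic_form)
  also have "\<dots> = (\<Sum>x\<in>V. \<Sum>y\<in>V. A x y * (\<Sum>i<m. p x i * p y i))"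
    by (simp add: sum_distrib_left sum.swap[of _ "{..<m}"] mult_ac)
  also have "\<dots> \<le> (\<Sum>x\<in>V. \<Sum>y\<in>V. A x y * (- 1 / (t - 1)))"
    by (intro sum_mono) (auto simp: adj dest: edge)
  also have "\<dots> = (\<Sum>x\<in>V. \<Sum>y\<in>V. A x y) * (- 1 / (t - 1))"
    by (simp only: sum_distrib_right)
  also have "\<dots> = (- d / (t - 1)) * card V"
    by (simp add: degree)
  finally have "lam * card V \<le> (- d / (t - 1)) * card V" .
  moreover have "card V > 0"
    using assms(1,2) by (simp add: card_gt_0_iff)
  ultimately have "lam \<le> - d / (t - 1)"
    by (simp add: mult_right_le_imp_le)
  then have "lam * (t - 1) \<le> (- d / (t - 1)) * (t - 1)"
    using t by (intro mult_right_mono) auto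
  then have "lam * (t - 1) \<le> - d"
    using t by simp
  then have "- d / lam \<le> t - 1"
    using \<open>lam < 0\<close> by (subst neg_divide_le_eq) (simp_all add: mult.commute)
  then show ?thesis
    by simp
qed

lemma sum_walsh_singletons:
  assumes "x \<subseteq> {..<n}" "y \<subseteq> {..<n}"
  shows "(\<Sum>i<n. walsh {i} x * walsh {i} y) = real n - 2 * real (card (sym_diff x y))"
proof -
  define D where "D = sym_diff x y"
  have "walsh {i} x * walsh {i} y = 1 - 2 * of_bool (i \<in> D)" for i
    using assms finite_subset[of _ "{..<n}"] by (simp add: D_def walsh_mult walsh_singleton)
  then have "(\<Sum>i<n. walsh {i} x * walsh {i} y) = real n - 2 * real (card ({..<n} \<inter> D))"
    by (simp add: sum_subtractf sum_distrib_left[symmetric])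
  also have "{..<n} \<inter> D = D"
    using assms by (auto simp: D_def)
  finally show ?thesis
    by (simp add: D_def)
qed

lemma Hverts_sign_vector_coloring:
  assumes "n < 2 * k" "k \<le> n"
  shows "vector_coloring (Hverts n) (Hadj n k) (2 * real k / (2 * real k - real n)) n
           (\<lambda>x i. (if i \<in> x then -1 else 1) / sqrt (real n))"
  unfolding vector_coloring_def
proof (intro conjI ballI impI)
  have pos: "2 * real k - real n > 0" "real n > 0"
    using assms by auto
  show "2 \<le> 2 * real k / (2 * real k - real n)"
    using pos assms by (simp add: field_simps)
  fix x assume "x \<in> Hverts n"
  have "((if i \<in> x then -1 else 1) / sqrt (real n))\<^sup>2 = 1 / real n" for i
    using pos by (simp add: power_divide)
  then show "(\<Sum>i<n. ((if i \<in> x then -1 else 1) / sqrt (real n))\<^sup>2) = 1"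
    using pos by simp
  fix y assume "y \<in> Hverts n" "Hadj n k x y"
  let ?inner = "\<Sum>i<n. (if i \<in> x then -1 else 1) / sqrt (real n)
                         * ((if i \<in> y then -1 else 1) / sqrt (real n))"
  have "?inner = (real n - 2 * real k) / real n"
    using sum_walsh_singletons[of x n y] \<open>x \<in> Hverts n\<close> \<open>y \<in> Hverts n\<close> \<open>Hadj n k x y\<close> pos
    by (simp add: Hverts_def Hadj_def walsh_singleton sum_divide_distrib[symmetric])
  also have "\<dots> = - 1 / (2 * real k / (2 * real k - real n) - 1)"
    using pos by (simp add: field_simps)
  finally show "?inner \<le> - 1 / (2 * real k / (2 * real k - real n) - 1)"
    by simp
qed

lemma Hverts_chi_v:
  assumes "even k" "n < 2 * k" "k \<le> n"
  shows "chi_v (Hverts n) (Hadj n k) = 2 * real k / (2 * real k - real n)"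
  unfolding chi_v_def
proof (rule cInf_eq_minimum)
  show "2 * real k / (2 * real k - real n) \<in> {t. \<exists>m p. vector_coloring (Hverts n) (Hadj n k) t m p}"
    using Hverts_sign_vector_coloring[OF assms(2,3)] by blast
  fix t assume "t \<in> {t. \<exists>m p. vector_coloring (Hverts n) (Hadj n k) t m p}"
  then obtain m p where coloring: "vector_coloring (Hverts n) (Hadj n k) t m p"
    by blast
  have pos: "0 < n" "0 < n choose k" "real n < 2 * real k" "real n - 2 * real k \<noteq> 0"
    using assms by auto
  have lam: "real_of_int (krawtchouk n k 1) = (real n - 2 * real k) / real n * real (n choose k)"
    using krawtchouk_at_one_eq[of k n] assms by simp
  have "1 - real (n choose k) / of_int (krawtchouk n k 1) \<le> t"
  proof (rule vector_coloring_hoffman_bound[OF Hverts_finite _ _ _ _ _ coloring])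
    show "Hverts n \<noteq> {}"
      by (auto simp: Hverts_def)
    show "Hadj_mat n k x y = (if Hadj n k x y then 1 else 0)" for x y
      by (simp add: Hadj_mat_def)
    show "(\<Sum>y\<in>Hverts n. Hadj_mat n k x y) = real (n choose k)" if "x \<in> Hverts n" for x
      using Hverts_degree[OF assms(1) that] .
    have "(real n - 2 * real k) / real n < 0"
      using pos by (simp add: divide_neg_pos)
    then show "of_int (krawtchouk n k 1) < (0::real)"
      unfolding lam using pos by (intro mult_neg_pos) simp_all
  qed (rule Hverts_quadratic_form_ge[OF assms])
  also have "1 - real (n choose k) / of_int (krawtchouk n k 1) = 2 * real k / (2 * real k - real n)"
    unfolding lam using pos by (simp add: field_simps)
  finally show "2 * real k / (2 * real k - real n) \<le> t" .
qed

section \<open>The least eigenspace\<close>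

lemma sum_Pow_card_one:
  assumes "finite N"
  shows "(\<Sum>S\<in>Pow N. if card S = 1 then h S else 0) = (\<Sum>i\<in>N. h {i})"
proof -
  have "{S \<in> Pow N. card S = 1} = (\<lambda>i. {i}) ` N"
    by (auto simp: card_1_singleton_iff)
  then have "(\<Sum>S\<in>Pow N. if card S = 1 then h S else 0) = (\<Sum>S\<in>(\<lambda>i. {i}) ` N. h S)"
    using assms by (simp add: sum.inter_filter[symmetric])
  also have "\<dots> = (\<Sum>i\<in>N. h {i})"
    by (simp add: sum.reindex)
  finally show ?thesis .
qed

lemma sum_Pow_Diff: "(\<Sum>S\<in>Pow N. h (N - S)) = (\<Sum>S\<in>Pow N. h S)"
  by (rule sum.reindex_bij_witness[of _ "\<lambda>S. N - S" "\<lambda>S. N - S"]) auto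

lemma sum_Pow_weight_one_symmetric:
  fixes F :: "'a set \<Rightarrow> real"
  assumes "finite N" "2 < card N"
    and weight: "\<And>S. S \<subseteq> N \<Longrightarrow> F S \<noteq> 0 \<Longrightarrow> card S = 1 \<or> card S = card N - 1"
    and symmetric: "\<And>S. S \<subseteq> N \<Longrightarrow> F (N - S) = F S"
  shows "(\<Sum>S\<in>Pow N. F S) = 2 * (\<Sum>i\<in>N. F {i})"
proof -
  have card_Diff: "card (N - S) = card N - 1 \<longleftrightarrow> card S = 1" if "S \<subseteq> N" for S
  proof -
    have "card (N - S) = card N - card S" "card S \<le> card N"
      using that assms(1) by (simp_all add: card_Diff_subset finite_subset card_mono)
    then show ?thesis
      using assms(2) by linarith
  qed
  have "F S = (if card S = 1 then F S else 0) + (if card S = card N - 1 then F S else 0)"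
    if "S \<in> Pow N" for S
    using that weight[of S] assms(2) by auto
  then have "(\<Sum>S\<in>Pow N. F S)
        = (\<Sum>S\<in>Pow N. if card S = 1 then F S else 0)
          + (\<Sum>S\<in>Pow N. if card S = card N - 1 then F S else 0)"
    by (simp only: sum.distrib[symmetric] cong: sum.cong)
  also have "(\<Sum>S\<in>Pow N. if card S = card N - 1 then F S else 0)
             = (\<Sum>S\<in>Pow N. if card (N - S) = card N - 1 then F (N - S) else 0)"
    by (rule sum_Pow_Diff[symmetric])
  also have "\<dots> = (\<Sum>S\<in>Pow N. if card S = 1 then F S else 0)"
  proof (rule sum.cong[OF refl])
    fix S assume "S \<in> Pow N"
    then show "(if card (N - S) = card N - 1 then F (N - S) else 0)
               = (if card S = 1 then F S else 0)"
      using card_Diff[of S] symmetric[of S] by simp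
  qed
  finally show ?thesis
    using sum_Pow_card_one[OF assms(1), of F] by linarith
qed

lemma is_eigenvector_scale:
  "is_eigenvector V A l f \<Longrightarrow> c \<noteq> 0 \<Longrightarrow> is_eigenvector V A l (\<lambda>x. c * f x)"
  by (simp add: is_eigenvector_def sum_distrib_left[symmetric] mult.left_commute)

text \<open>For \<open>n/2 + 1 \<le> k < n\<close> the strict Krawtchouk bound leaves only the characters of
  weight \<open>1\<close> and \<open>n - 1\<close>, and on even sets \<open>walsh ({..<n} - {i}) = walsh {i}\<close>.\<close>
lemma Hverts_least_eigenvector_expansion:
  assumes "even k" "n + 2 \<le> 2 * k" "k < n"
    and eigen: "is_eigenvector (Hverts n) (Hadj_mat n k) (of_int (krawtchouk n k 1)) f"
    and x: "x \<in> Hverts n"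
  shows "f x = (\<Sum>i<n. walsh_transform {..<n} (zero_extension (Hverts n) f) {i} / 2 ^ (n - 1)
                        * walsh {i} x)"
proof -
  let ?N = "{..<n}" and ?g = "zero_extension (Hverts n) f"
  define F where "F S = walsh S x * walsh_transform ?N ?g S" for S
  have xN: "x \<subseteq> ?N" "even (card x)"
    using x by (auto simp: Hverts_eq)
  have weight: "card S = 1 \<or> card S = n - 1" if "S \<subseteq> ?N" "F S \<noteq> 0" for S
  proof (rule ccontr)
    assume "\<not> (card S = 1 \<or> card S = n - 1)"
    moreover have "card S \<le> n"
      using card_mono[OF _ that(1)] by simp
    ultimately have "krawtchouk n k 1 < krawtchouk n k (card S)"
      using krawtchouk_at_one_less[OF assms(1-3)] by simp
    moreover have "of_int (krawtchouk n k (card S)) = (of_int (krawtchouk n k 1) :: real)"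
      using Hverts_eigenvector_walsh_support[OF assms(1) eigen that(1)] that(2) by (simp add: F_def)
    ultimately show False
      by simp
  qed
  have symmetric: "F (?N - S) = F S" if "S \<subseteq> ?N" for S
  proof -
    have "walsh (?N - S) y * ?g y = walsh S y * ?g y" if "y \<subseteq> ?N" for y
      using that \<open>S \<subseteq> ?N\<close> walsh_Diff_even[of ?N S y]
      by (cases "y \<in> Hverts n") (auto simp: Hverts_eq zero_extension_def)
    then have "walsh_transform ?N ?g (?N - S) = walsh_transform ?N ?g S"
      unfolding walsh_transform_def by (intro sum.cong refl) auto
    then show ?thesis
      using that xN walsh_Diff_even[of ?N S x] by (simp add: F_def)
  qed
  have "2 * 2 ^ (n - 1) * f x = 2 ^ n * ?g x"
    using x assms by (simp add: zero_extension_def flip: power_Suc)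
  also have "\<dots> = (\<Sum>S\<in>Pow ?N. F S)"
    using walsh_inversion[of ?N x ?g] xN by (simp add: F_def)
  also have "\<dots> = 2 * (\<Sum>i<n. F {i})"
    using sum_Pow_weight_one_symmetric[of ?N F] weight symmetric assms by simp
  finally have "2 ^ (n - 1) * f x = (\<Sum>i<n. F {i})"
    by simp
  then show ?thesis
    by (simp add: F_def sum_divide_distrib[symmetric] eq_divide_eq mult.commute)
qed

lemma Hverts_walsh_singletons_orthogonal:
  assumes "i < n" "j < n" "2 < n"
  shows "(\<Sum>x\<in>Hverts n. walsh {i} x * walsh {j} x) = (if i = j then 2 ^ (n - 1) else 0)"
proof -
  have "card (sym_diff {i} {j}) \<le> card {i, j}"
    by (rule card_mono) auto
  moreover have "card {i, j} \<le> 2"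
    by (cases "i = j") auto
  ultimately have D: "sym_diff {i} {j} \<subseteq> {..<n}" "sym_diff {i} {j} \<noteq> {..<n}"
      "sym_diff {i} {j} = {} \<longleftrightarrow> i = j"
    using assms by fastforce+
  have "walsh {i} x * walsh {j} x = walsh (sym_diff {i} {j}) x" for x
    using walsh_mult[of "{i}" "{j}" x] walsh_commute[of x] by simp
  then show ?thesis
    using sum_Hverts_walsh[OF D(1)] D(2,3) assms by simp
qed

lemma Hverts_canonical_vector_coloring:
  assumes "even k" "n + 2 \<le> 2 * k" "k < n"
  shows "canonical_vector_coloring (Hverts n) (Hadj_mat n k) n
           (\<lambda>x i. (if i \<in> x then -1 else 1) / sqrt (real n))"
proof -
  define a :: real where "a = 2 ^ (n - 1)"
  have a: "a > 0" "real (card (Hverts n)) = a"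
    using Hverts_card[of n] assms by (simp_all add: a_def)
  define q :: "nat \<Rightarrow> nat set \<Rightarrow> real" where "q i x = walsh {i} x / sqrt a" for i x
  have lam: "lambda_min (Hverts n) (Hadj_mat n k) = of_int (krawtchouk n k 1)"
    using Hverts_lambda_min[of k n] assms by simp
  show ?thesis
    unfolding canonical_vector_coloring_def lam
  proof (intro exI[of _ q] conjI allI impI ballI)
    fix i assume "i < n"
    have "is_eigenvector (Hverts n) (Hadj_mat n k) (of_int (krawtchouk n k 1)) (walsh {i})"
      using Hverts_walsh_is_eigenvector[OF assms(1), of "{i}" n] \<open>i < n\<close> by simp
    then have "is_eigenvector (Hverts n) (Hadj_mat n k) (of_int (krawtchouk n k 1))
                 (\<lambda>x. 1 / sqrt a * walsh {i} x)"
      by (rule is_eigenvector_scale) (use a in simp)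
    moreover have "q i = (\<lambda>x. 1 / sqrt a * walsh {i} x)"
      by (simp add: fun_eq_iff q_def)
    ultimately show "is_eigenvector (Hverts n) (Hadj_mat n k) (of_int (krawtchouk n k 1)) (q i)"
      by simp
  next
    fix i j assume "i < n" "j < n"
    then have "(\<Sum>x\<in>Hverts n. walsh {i} x * walsh {j} x) = (if i = j then a else 0)"
      using Hverts_walsh_singletons_orthogonal[of i n j] assms by (simp add: a_def)
    then show "(\<Sum>x\<in>Hverts n. q i x * q j x) = (if i = j then 1 else 0)"
      using a by (simp add: q_def sum_divide_distrib[symmetric])
  next
    fix f assume "is_eigenvector (Hverts n) (Hadj_mat n k) (of_int (krawtchouk n k 1)) f"
    from Hverts_least_eigenvector_expansion[OF assms this]
    show "\<exists>c. \<forall>x\<in>Hverts n. f x = (\<Sum>i<n. c i * q i x)"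
      using a
      by (intro exI[of _ "\<lambda>i. walsh_transform {..<n} (zero_extension (Hverts n) f) {i} / a * sqrt a"])
        (simp add: q_def a_def)
  next
    fix x i assume "x \<in> Hverts n" "i < n"
    show "(if i \<in> x then -1 else 1) / sqrt (real n)
          = sqrt (real (card (Hverts n)) / real n) * q i x"
      using a by (simp add: q_def walsh_singleton real_sqrt_divide)
  qed
qed

theorem lemma3p6:
  fixes n k :: nat
  assumes "n > 0"
  shows "(even k \<and> real n + 1 \<le> 2 * real k \<and> k \<le> n \<longrightarrow>
            lambda_min (Hverts n) (Hadj_mat n k)
              = (real n - 2 * real k) / real k * real ((n - 1) choose (k - 1))
          \<and> chi_v (Hverts n) (Hadj n k) = 2 * real k / (2 * real k - real n))
       \<and> (even k \<and> real n / 2 + 1 \<le> real k \<and> k + 1 \<le> n \<longrightarrow>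
            canonical_vector_coloring (Hverts n) (Hadj_mat n k) n
              (\<lambda>x i. (if i \<in> x then -1 else 1) / sqrt (real n)))"
proof (intro conjI impI)
  assume "even k \<and> real n + 1 \<le> 2 * real k \<and> k \<le> n"
  then have k: "even k" "n < 2 * k" "k \<le> n"
    by linarith+
  have "real k * real (n choose k) = real n * real ((n - 1) choose (k - 1))"
    using arg_cong[OF times_binomial_minus1_eq[of k n], of real] k by simp
  then have "real (n choose k) = real n / real k * real ((n - 1) choose (k - 1))"
    using k by (simp add: field_simps)
  then show "lambda_min (Hverts n) (Hadj_mat n k)
               = (real n - 2 * real k) / real k * real ((n - 1) choose (k - 1))"
    using Hverts_lambda_min[OF k] krawtchouk_at_one_eq[of k n] k by simp
  show "chi_v (Hverts n) (Hadj n k) = 2 * real k / (2 * real k - real n)"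
    using Hverts_chi_v[OF k] .
next
  assume "even k \<and> real n / 2 + 1 \<le> real k \<and> k + 1 \<le> n"
  then show "canonical_vector_coloring (Hverts n) (Hadj_mat n k) n
               (\<lambda>x i. (if i \<in> x then -1 else 1) / sqrt (real n))"
    by (intro Hverts_canonical_vector_coloring) linarith+
qed

end
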